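(* For $k\geq 2$ let $S=\{0,1\}\cup\{2^{2^i}:1\leq i\leq k-1\}$ and $a=2^{2^k}$, and define on $(0,1]$ $$W=\frac{1}{g_S\,g_{\{a\}}}\left(\frac{g_{\{a\}}'\,g_S-g_S'\,g_{\{a\}}}{g_S+g_{\{a\}}}\right)^2 .$$ Then there is a constant $c>0$ (independent of $k$) such that for all sufficiently large $k$, $$\int_{1-\frac{1}{2a}}^{1}\sqrt{W(t)}\,\mathrm{d}t\geq\frac{c}{\sqrt{k}}.$$
   Context: $\mathbb{N}=\{0,1,2,\dots\}$. For a finite set $S\subseteq\mathbb{N}$ define $g_S(t)=\sum_{e\in S}t^{2e}$; in particular $g_{\{a\}}(t)=t^{2a}$. *)

theory Defs
  imports "HOL-Analysis.Analysis"
begin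

definition g :: "nat set \<Rightarrow> real \<Rightarrow> real" where
  "g S t = (\<Sum>e\<in>S. t ^ (2 * e))"

definition Sk :: "nat \<Rightarrow> nat set" where
  "Sk k = {0, 1} \<union> {2 ^ (2 ^ i) | i. 1 \<le> i \<and> i \<le> k - 1}"

definition ak :: "nat \<Rightarrow> nat" where
  "ak k = 2 ^ (2 ^ k)"

definition W :: "nat \<Rightarrow> real \<Rightarrow> real" where
  "W k t = (let gs = g (Sk k); ga = g {ak k} in
     1 / (gs t * ga t) *
     ((deriv ga t * gs t - deriv gs t * ga t) / (gs t + ga t)) ^ 2)"

end

theory Submission
  imports Defs
begin

text \<open>
  Put \<open>N = card S \<le> k + 1\<close> and \<open>s = 2^2^(k-1)\<close>, so that \<open>a = s^2\<close> and every exponent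
  of \<open>S\<close> is at most \<open>s\<close>. For \<open>1 - 1/(4a) \<le> t \<le> 1\<close> Bernoulli's inequality gives
  \<open>t^(2a) \<ge> 1/2\<close>, hence \<open>N/2 \<le> g_S \<le> N\<close> and \<open>1/2 \<le> g_{a} \<le> 1\<close>. In the numerator of \<open>W\<close>
  the term \<open>g_{a}' g_S \<ge> aN/2\<close> dominates \<open>g_S' g_{a} \<le> 2Ns \<le> aN/4\<close>, so \<open>W \<ge> a^2/(64N)\<close>.
  Integrating \<open>sqrt W \<ge> a/(16 sqrt k)\<close> over this interval of length \<open>1/(4a)\<close> gives \<open>c = 1/64\<close>.
\<close>

lemma continuous_on_g [continuous_intros]: "continuous_on A (g S)"
  unfolding g_def[abs_def] by (intro continuous_intros)

lemma deriv_g: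
  assumes "finite S"
  shows "deriv (g S) = (\<lambda>t. \<Sum>e\<in>S. real (2 * e) * t ^ (2 * e - 1))"
proof
  fix t :: real
  have "((\<lambda>t. \<Sum>e\<in>S. t ^ (2 * e)) has_field_derivative
          (\<Sum>e\<in>S. real (2 * e) * t ^ (2 * e - 1))) (at t)"
    unfolding One_nat_def by (rule DERIV_sum) (rule DERIV_pow)
  then show "deriv (g S) t = (\<Sum>e\<in>S. real (2 * e) * t ^ (2 * e - 1))"
    unfolding g_def[abs_def] by (rule DERIV_imp_deriv)
qed

lemma continuous_on_deriv_g [continuous_intros]: "finite S \<Longrightarrow> continuous_on A (deriv (g S))"
  by (simp add: deriv_g) (intro continuous_intros)

lemma g_pos: "finite S \<Longrightarrow> S \<noteq> {} \<Longrightarrow> t > 0 \<Longrightarrow> g S t > 0"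
  unfolding g_def by (intro sum_pos) auto

lemma g_le_card:
  assumes "0 \<le> t" "t \<le> 1"
  shows "g S t \<le> card S"
proof -
  have "g S t \<le> (\<Sum>e\<in>S. 1)"
    unfolding g_def by (intro sum_mono) (use assms in \<open>simp add: power_le_one\<close>)
  then show ?thesis by simp
qed

lemma card_mult_power_le_g:
  fixes t :: real
  assumes "\<And>e. e \<in> S \<Longrightarrow> e \<le> n" "0 \<le> t" "t \<le> 1"
  shows "card S * t ^ (2 * n) \<le> g S t"
proof -
  have "(\<Sum>e\<in>S. t ^ (2 * n)) \<le> g S t"
    unfolding g_def by (intro sum_mono power_decreasing) (use assms in auto)
  then show ?thesis by simp
qed

lemma deriv_g_nonneg: "finite S \<Longrightarrow> 0 \<le> t \<Longrightarrow> 0 \<le> deriv (g S) t"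
  by (simp add: deriv_g sum_nonneg)

lemma deriv_g_le:
  assumes "finite S" "\<And>e. e \<in> S \<Longrightarrow> e \<le> n" "0 \<le> t" "t \<le> 1"
  shows "deriv (g S) t \<le> 2 * card S * n"
proof -
  have "deriv (g S) t \<le> (\<Sum>e\<in>S. 2 * real n)"
    unfolding deriv_g[OF assms(1)]
  proof (rule sum_mono)
    fix e assume "e \<in> S"
    then have "real (2 * e) \<le> 2 * real n" using assms(2) by simp
    moreover have "t ^ (2 * e - 1) \<le> 1" using assms(3,4) by (simp add: power_le_one)
    moreover have "0 \<le> t ^ (2 * e - 1)" using assms(3) by simp
    ultimately show "real (2 * e) * t ^ (2 * e - 1) \<le> 2 * real n"
      using mult_mono[of "real (2 * e)" "2 * real n" "t ^ (2 * e - 1)" 1] by simp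
  qed
  then show ?thesis by simp
qed

lemma deriv_g_singleton_ge:
  assumes "0 \<le> t" "t \<le> 1"
  shows "2 * a * t ^ (2 * a) \<le> deriv (g {a}) t"
proof -
  have "t ^ (2 * a) \<le> t ^ (2 * a - 1)" by (rule power_decreasing) (use assms in auto)
  then show ?thesis by (simp add: deriv_g mult_left_mono)
qed

lemma power_ge_half_near_one:
  fixes t :: real
  assumes "a > 0" "1 - 1 / (4 * a) \<le> t"
  shows "1 / 2 \<le> t ^ (2 * a)"
proof -
  have "1 + real (2 * a) * (- (1 / (4 * a))) \<le> (1 + (- (1 / (4 * a)))) ^ (2 * a)"
    by (rule Bernoulli_inequality) (use assms in \<open>simp add: field_simps\<close>)
  also have "\<dots> \<le> t ^ (2 * a)"
    by (rule power_mono) (use assms in \<open>auto simp: field_simps\<close>)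
  finally show ?thesis using assms(1) by (simp add: field_simps)
qed

lemma quotient_lower_bound:
  fixes G P D\<^sub>S D\<^sub>a N A :: real
  assumes "0 < G" "G \<le> N" "0 < P" "P \<le> 1" "1 \<le> N" "0 \<le> A"
    and numerator: "N * A / 4 \<le> D\<^sub>a * G - D\<^sub>S * P"
  shows "A\<^sup>2 / (64 * N) \<le> 1 / (G * P) * ((D\<^sub>a * G - D\<^sub>S * P) / (G + P))\<^sup>2"
proof -
  have "G * P \<le> G" using assms mult_left_mono[of P 1 G] by simp
  then have "G * P \<le> N" using assms(2) by linarith
  moreover have "(G + P)\<^sup>2 \<le> (2 * N)\<^sup>2" using assms by (intro power_mono) auto
  ultimately have den: "G * P * (G + P)\<^sup>2 \<le> 4 * N ^ 3"
    using mult_mono[of "G * P" N "(G + P)\<^sup>2" "(2 * N)\<^sup>2"] assms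
    by (simp add: power2_eq_square power3_eq_cube)
  have "A\<^sup>2 / (64 * N) = (N * A / 4)\<^sup>2 / (4 * N ^ 3)"
    using assms by (simp add: power2_eq_square power3_eq_cube field_simps)
  also have "\<dots> \<le> (D\<^sub>a * G - D\<^sub>S * P)\<^sup>2 / (G * P * (G + P)\<^sup>2)"
    by (rule frac_le) (use assms den in \<open>auto intro: power_mono\<close>)
  also have "\<dots> = 1 / (G * P) * ((D\<^sub>a * G - D\<^sub>S * P) / (G + P))\<^sup>2"
    by (simp add: power_divide)
  finally show ?thesis .
qed

lemma W_form_lower_bound:
  fixes t :: real
  assumes S: "finite S" "S \<noteq> {}" and le_s: "\<And>e. e \<in> S \<Longrightarrow> e \<le> s"
    and "8 \<le> s" "a = s\<^sup>2" and t: "1 - 1 / (4 * a) \<le> t" "t \<le> 1"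
  shows "(real a)\<^sup>2 / (64 * real (card S)) \<le> 1 / (g S t * g {a} t) *
    ((deriv (g {a}) t * g S t - deriv (g S) t * g {a} t) / (g S t + g {a} t))\<^sup>2"
proof -
  define N where "N = real (card S)"
  have "s \<le> a" "8 * s \<le> a" using assms(4,5) by (auto simp: power2_eq_square)
  then have "a > 0" using assms(4) by linarith
  then have "1 / (4 * a) \<le> 1" by (simp add: field_simps)
  then have "0 \<le> t" using t(1) by linarith
  have N: "1 \<le> N" using S by (simp add: N_def Suc_le_eq card_gt_0_iff)
  have P_half: "1 / 2 \<le> t ^ (2 * a)" by (rule power_ge_half_near_one) fact+
  then have P: "1 / 2 \<le> g {a} t" "g {a} t \<le> 1"
    using g_le_card[OF \<open>0 \<le> t\<close> t(2), of "{a}"] by (auto simp: g_def)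
  have "N * t ^ (2 * a) \<le> g S t"
    unfolding N_def using le_s \<open>s \<le> a\<close> \<open>0 \<le> t\<close> t(2)
    by (intro card_mult_power_le_g) (auto intro: order.trans)
  moreover have "N * (1 / 2) \<le> N * t ^ (2 * a)" using P_half N by (intro mult_left_mono) auto
  ultimately have G: "N / 2 \<le> g S t" "g S t \<le> N"
    using g_le_card[OF \<open>0 \<le> t\<close> t(2), of S] by (auto simp: N_def)
  have "2 * a * (1 / 2) \<le> 2 * a * t ^ (2 * a)" using P_half by (intro mult_left_mono) auto
  then have "a \<le> deriv (g {a}) t"
    using deriv_g_singleton_ge[OF \<open>0 \<le> t\<close> t(2), of a] by simp
  then have "a * (N / 2) \<le> deriv (g {a}) t * g S t"
    using G N by (intro mult_mono) auto
  moreover have "deriv (g S) t * g {a} t \<le> deriv (g S) t"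
    using deriv_g_nonneg[OF S(1) \<open>0 \<le> t\<close>] P(2) mult_left_mono[of "g {a} t" 1] by simp
  moreover have "deriv (g S) t \<le> 2 * N * s"
    using deriv_g_le[OF S(1) le_s \<open>0 \<le> t\<close> t(2)] by (simp add: N_def)
  moreover have "a * (N / 2) = N * a / 4 + N * a / 4" by (simp add: field_simps)
  moreover have "2 * N * s \<le> N * a / 4" using \<open>8 * s \<le> a\<close> N by (simp add: field_simps)
  ultimately have "N * a / 4 \<le> deriv (g {a}) t * g S t - deriv (g S) t * g {a} t"
    by linarith
  moreover have "0 < g S t" using G N by linarith
  moreover have "0 < g {a} t" using P by linarith
  ultimately show ?thesis
    unfolding N_def[symmetric] using G(2) N P(2) by (intro quotient_lower_bound) auto
qed

lemma integral_ge_on_final_segment: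
  fixes f :: "real \<Rightarrow> real"
  assumes "continuous_on {l..u} f" "\<And>t. t \<in> {l..u} \<Longrightarrow> 0 \<le> f t"
    and "l \<le> b" "b \<le> u" "\<And>t. t \<in> {b..u} \<Longrightarrow> m \<le> f t"
  shows "(u - b) * m \<le> integral {l..u} f"
proof -
  have f: "f integrable_on {l..u}" by (rule integrable_continuous_interval) fact
  have "(u - b) * m = integral {b..u} (\<lambda>_. m)" using assms(4) by simp
  also have "\<dots> \<le> integral {b..u} f"
    by (rule integral_le) (use assms(3,5) integrable_subinterval_real[OF f] in auto)
  also have "\<dots> \<le> integral {l..b} f + integral {b..u} f"
    using assms(2,4) by (auto intro!: integral_nonneg integrable_subinterval_real[OF f])
  also have "\<dots> = integral {l..u} f"
    by (rule Henstock_Kurzweil_Integration.integral_combine[OF assms(3,4) f])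
  finally show ?thesis .
qed

lemma Sk_eq_image: "Sk k = {0, 1} \<union> (\<lambda>i. 2 ^ 2 ^ i) ` {1..k - 1}"
  unfolding Sk_def by auto

lemma finite_Sk: "finite (Sk k)"
  unfolding Sk_eq_image by simp

lemma Sk_nonempty: "Sk k \<noteq> {}"
  unfolding Sk_def by auto

lemma card_Sk_le:
  assumes "k \<ge> 1"
  shows "card (Sk k) \<le> k + 1"
proof -
  have "card (Sk k) \<le> card {0 :: nat, 1} + card ((\<lambda>i. 2 ^ 2 ^ i :: nat) ` {1..k - 1})"
    unfolding Sk_eq_image by (rule card_Un_le)
  also have "\<dots> \<le> 2 + (k - 1)" using card_image_le[of "{1..k - 1}"] by simp
  finally show ?thesis using assms by linarith
qed

lemma mem_Sk_le: "e \<in> Sk k \<Longrightarrow> e \<le> 2 ^ 2 ^ (k - 1)"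
  unfolding Sk_def by (auto intro: power_increasing)

lemma ak_eq_square: "k \<ge> 1 \<Longrightarrow> ak k = (2 ^ 2 ^ (k - 1))\<^sup>2"
  unfolding ak_def by (cases k) (simp_all flip: power_mult)

lemma g_Sk_ak_pos: "0 < t \<Longrightarrow> 0 < g (Sk k) t \<and> 0 < g {ak k} t"
  using g_pos[OF finite_Sk Sk_nonempty] g_pos[of "{ak k}"] by simp

lemma continuous_on_W: "continuous_on {0<..} (W k)"
proof -
  have "g (Sk k) t * g {ak k} t \<noteq> 0 \<and> g (Sk k) t + g {ak k} t \<noteq> 0" if "0 < t" for t
    using g_Sk_ak_pos[OF that, of k] by simp
  then show ?thesis
    unfolding W_def[abs_def] Let_def by (intro continuous_intros finite_Sk finite.intros) auto
qed

lemma W_nonneg: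
  assumes "0 < t"
  shows "0 \<le> W k t"
  using g_Sk_ak_pos[OF assms, of k] unfolding W_def Let_def by (intro mult_nonneg_nonneg) simp_all

lemma W_lower_bound:
  assumes "3 \<le> k" "1 - 1 / (4 * ak k) \<le> t" "t \<le> 1"
  shows "(real (ak k))\<^sup>2 / (256 * k) \<le> W k t"
proof -
  have "(2 :: nat) ^ 2 \<le> 2 ^ (k - 1)" using assms(1) by (intro power_increasing) auto
  then have "(2 :: nat) ^ 2 ^ 2 \<le> 2 ^ 2 ^ (k - 1)" by (rule power_increasing) simp
  then have "(8 :: nat) \<le> 2 ^ 2 ^ (k - 1)" by simp
  then have "(real (ak k))\<^sup>2 / (64 * real (card (Sk k))) \<le> W k t"
    unfolding W_def Let_def
    using W_form_lower_bound[OF finite_Sk Sk_nonempty mem_Sk_le _ ak_eq_square] assms by simp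
  moreover have "64 * real (card (Sk k)) \<le> 256 * k"
    using card_Sk_le[of k] assms(1) by simp
  moreover have "0 < real (card (Sk k))"
    using finite_Sk Sk_nonempty by (simp add: card_gt_0_iff)
  ultimately show ?thesis
    using divide_left_mono[of "64 * real (card (Sk k))" "256 * real k" "(real (ak k))\<^sup>2"]
      assms(1) by simp
qed

theorem lemma6p3:
  shows "\<exists>c::real. c > 0 \<and> (\<exists>K::nat. \<forall>k\<ge>K. k \<ge> 2 \<longrightarrow>
    integral {1 - 1 / (2 * real (ak k)) .. 1} (\<lambda>t. sqrt (W k t)) \<ge> c / sqrt (real k))"
proof (intro exI[of _ "1 / 64"] conjI exI[of _ 3] allI impI)
  show "(1 / 64 :: real) > 0" by simp
  fix k :: nat assume "3 \<le> k"
  define a where "a = real (ak k)"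
  define m where "m = a / (16 * sqrt k)"
  have "a \<ge> 1" unfolding a_def ak_def by simp
  then have ends: "0 < 1 - 1 / (2 * a)" "1 - 1 / (2 * a) \<le> 1 - 1 / (4 * a)" "1 - 1 / (4 * a) \<le> 1"
    by (simp_all add: field_simps)
  have "continuous_on {1 - 1 / (2 * a)..1} (W k)"
    by (rule continuous_on_subset[OF continuous_on_W]) (use ends in auto)
  then have "continuous_on {1 - 1 / (2 * a)..1} (\<lambda>t. sqrt (W k t))"
    by (intro continuous_intros)
  moreover have "m \<le> sqrt (W k t)" if "t \<in> {1 - 1 / (4 * a)..1}" for t
  proof (rule real_le_rsqrt)
    show "m\<^sup>2 \<le> W k t"
      using W_lower_bound[OF \<open>3 \<le> k\<close>] that \<open>3 \<le> k\<close>
      by (simp add: m_def a_def power_divide power_mult_distrib)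
  qed
  ultimately have "(1 - (1 - 1 / (4 * a))) * m \<le> integral {1 - 1 / (2 * a)..1} (\<lambda>t. sqrt (W k t))"
    using ends(1) by (intro integral_ge_on_final_segment[OF _ _ ends(2,3)]) (auto intro!: W_nonneg)
  moreover have "(1 - (1 - 1 / (4 * a))) * m = (1 / 64) / sqrt k"
    using \<open>a \<ge> 1\<close> by (simp add: m_def field_simps)
  ultimately show "(1 / 64) / sqrt k \<le> integral {1 - 1 / (2 * real (ak k))..1} (\<lambda>t. sqrt (W k t))"
    by (simp add: a_def)
qed

end
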